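(* Let $r,s,t$ be integers with $1\le r\le s\le t$ and $n=r+s+t+1$. Then the $(2r+1)$-fault diameter of the exchanged 3-ary $n$-cube satisfies $D^{f}_{2r+1}(E3C(r,s,t))\ge r+s+t+4=n+3$.
   Context: The exchanged 3-ary $n$-cube $E3C(r,s,t)$ ($r,s,t\ge1$, $n=r+s+t+1$): vertices are strings $x=x[r+s+t]\cdots x[1]x[0]$ with all $x[i]\in\{0,1,2\}$, written $x=ABCd$ where $A=x[r+s+t]\cdots x[s+t+1]\in\{0,1,2\}^r$, $B=x[s+t]\cdots x[t+1]\in\{0,1,2\}^s$, $C=x[t]\cdots x[1]\in\{0,1,2\}^t$, $d=x[0]$. Two distinct vertices $x=ABCd$, $y=A'B'C'd'$ are adjacent iff one of: (E0) $A=A',B=B',C=C'$ and $d\ne d'$; (E1) $d=d'=0$, $A=A'$, $B=B'$ and $C,C'$ differ in exactly one position; (E2) $d=d'=1$, $A=A'$, $C=C'$ and $B,B'$ differ in exactly one position; (E3) $d=d'=2$, $B=B'$, $C=C'$ and $A,A'$ differ in exactly one position. For a connected graph $G$ and positive integer $\alpha\le\kappa(G)-1$ ($\kappa$ = vertex connectivity), the $\alpha$-fault diameter is $D^f_\alpha(G)=\max\{d_{G-F}(u,v): u\ne v\in V(G),\ F\subseteq V(G)\setminus\{u,v\},\ |F|=\alpha\}$, where $d_{G-F}$ is the shortest-path distance in $G-F$. (It is known that $\kappa(E3C(r,s,t))=2r+2$ when $r\le s\le t$.) *)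

theory Defs
  imports Main "HOL-Library.Extended_Nat"
begin

text \<open>Vertices of E3C(r,s,t): ternary strings x[r+s+t] ... x[1] x[0], represented as
  functions nat => nat with x i < 3 for i <= r+s+t and x i = 0 beyond (canonical padding).\<close>

definition e3c_vert :: "nat \<Rightarrow> nat \<Rightarrow> nat \<Rightarrow> (nat \<Rightarrow> nat) set" where
  "e3c_vert r s t = {x. \<forall>i. (i \<le> r+s+t \<longrightarrow> x i < 3) \<and> (r+s+t < i \<longrightarrow> x i = 0)}"

definition differ_one_in :: "nat set \<Rightarrow> (nat \<Rightarrow> nat) \<Rightarrow> (nat \<Rightarrow> nat) \<Rightarrow> bool" where
  "differ_one_in I x y \<longleftrightarrow> card {i\<in>I. x i \<noteq> y i} = 1 \<and> (\<forall>i. i \<notin> I \<longrightarrow> x i = y i)"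

definition e3c_adj :: "nat \<Rightarrow> nat \<Rightarrow> nat \<Rightarrow> (nat \<Rightarrow> nat) \<Rightarrow> (nat \<Rightarrow> nat) \<Rightarrow> bool" where
  "e3c_adj r s t x y \<longleftrightarrow> x \<in> e3c_vert r s t \<and> y \<in> e3c_vert r s t \<and> x \<noteq> y \<and>
     ( (\<forall>i. 1 \<le> i \<longrightarrow> x i = y i) \<and> x 0 \<noteq> y 0                       \<comment> \<open>E0\<close>
     \<or> (x 0 = 0 \<and> y 0 = 0 \<and> differ_one_in {1..t} x y)                 \<comment> \<open>E1: C part\<close>
     \<or> (x 0 = 1 \<and> y 0 = 1 \<and> differ_one_in {t+1..s+t} x y)             \<comment> \<open>E2: B part\<close>
     \<or> (x 0 = 2 \<and> y 0 = 2 \<and> differ_one_in {s+t+1..r+s+t} x y))       \<comment> \<open>E3: A part\<close>"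

definition walk_in :: "'a set \<Rightarrow> ('a \<Rightarrow> 'a \<Rightarrow> bool) \<Rightarrow> 'a list \<Rightarrow> bool" where
  "walk_in V E p \<longleftrightarrow> p \<noteq> [] \<and> set p \<subseteq> V \<and> (\<forall>i. Suc i < length p \<longrightarrow> E (p ! i) (p ! Suc i))"

text \<open>Shortest-path distance in the graph (V,E) (infinite if no path).\<close>
definition gdist :: "'a set \<Rightarrow> ('a \<Rightarrow> 'a \<Rightarrow> bool) \<Rightarrow> 'a \<Rightarrow> 'a \<Rightarrow> enat" where
  "gdist V E u v = (INF p \<in> {p. walk_in V E p \<and> hd p = u \<and> last p = v}. enat (length p - 1))"

definition fault_diam :: "'a set \<Rightarrow> ('a \<Rightarrow> 'a \<Rightarrow> bool) \<Rightarrow> nat \<Rightarrow> enat" where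
  "fault_diam V E \<alpha> = (SUP (u,v,F) \<in> {(u,v,F). u \<in> V \<and> v \<in> V \<and> u \<noteq> v \<and> F \<subseteq> V - {u,v} \<and> card F = \<alpha>}.
      gdist (V - F) E u v)"

end

theory Submission
  imports Defs
begin

text \<open>Take \<open>u = 0\<dots>02\<close>, \<open>v = 1\<dots>10\<close> and delete the \<open>2r+1\<close> neighbours of \<open>u\<close> other
  than \<open>0\<dots>00\<close>, so every surviving \<open>u\<close>-\<open>v\<close> path starts with the edge to \<open>0\<dots>00\<close>.
  The number of positions still different from 1, plus the least number of E0 moves needed
  to visit the blocks containing such positions and return to last digit 0, drops by at
  most 1 along every edge; it is \<open>r+s+t+3\<close> at \<open>0\<dots>00\<close> and 0 at \<open>v\<close>, so the path has
  length at least \<open>r+s+t+4\<close>.\<close>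

lemma walk_in_Cons_Cons:
  "walk_in V E (a # b # q) \<longleftrightarrow> a \<in> V \<and> E a b \<and> walk_in V E (b # q)"
  unfolding walk_in_def by (auto simp: nth_Cons less_Suc_eq_0_disj split: nat.splits)

lemma walk_potential_bound:
  assumes "walk_in V E p" and lip: "\<And>x y. E x y \<Longrightarrow> f x \<le> f y + (1::nat)"
  shows "f (hd p) \<le> f (last p) + (length p - 1)"
  using assms(1)
proof (induction p rule: induct_list012)
  case (3 a b q)
  then have "E a b" and "f b \<le> f (last (b # q)) + length q"
    by (simp_all add: walk_in_Cons_Cons)
  with lip show ?case by fastforce
qed (auto simp: walk_in_def)

lemma gdist_ge_potential_drop:
  assumes "\<And>x y. E x y \<Longrightarrow> f x \<le> f y + (1::nat)"
  shows "enat (f u - f v) \<le> gdist V E u v"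
  unfolding gdist_def
proof (rule INF_greatest, clarify)
  fix p assume "walk_in V E p" and "u = hd p" and "v = last p"
  with walk_potential_bound[OF _ assms] show "enat (f (hd p) - f (last p)) \<le> enat (length p - 1)"
    by fastforce
qed

lemma gdist_ge_eSuc_unique_neighbour:
  assumes "u \<noteq> v" and only_w: "\<And>b. b \<in> V \<Longrightarrow> E u b \<Longrightarrow> b = w"
  shows "eSuc (gdist V E w v) \<le> gdist V E u v"
  unfolding gdist_def[of V E u v]
proof (rule INF_greatest)
  fix p assume "p \<in> {p. walk_in V E p \<and> hd p = u \<and> last p = v}"
  then have walk: "walk_in V E p" and "u = hd p" and "v = last p" by auto
  with \<open>u \<noteq> v\<close> obtain b q where p: "p = u # b # q"
    by (cases p rule: remdups_adj.cases) (auto simp: walk_in_def)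
  with walk have "walk_in V E (b # q)" "b \<in> V" "E u b"
    by (auto simp: walk_in_Cons_Cons walk_in_def)
  with only_w have "b = w" by blast
  with \<open>walk_in V E (b # q)\<close> have "walk_in V E (w # q)" by simp
  moreover have "last (w # q) = v" using \<open>v = last p\<close> \<open>b = w\<close> p by simp
  ultimately have "gdist V E w v \<le> enat (length q)"
    unfolding gdist_def by (intro INF_lower2[of "w # q"]) auto
  then show "eSuc (gdist V E w v) \<le> enat (length p - 1)"
    using p by (simp add: eSuc_enat[symmetric])
qed

lemma gdist_le_fault_diam:
  assumes "u \<in> V" "v \<in> V" "u \<noteq> v" "F \<subseteq> V - {u, v}" "card F = \<alpha>"
  shows "gdist (V - F) E u v \<le> fault_diam V E \<alpha>"
  unfolding fault_diam_def using assms by (intro SUP_upper2[of "(u, v, F)"]) auto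

lemma differ_one_inE:
  assumes "differ_one_in I x y"
  obtains j where "j \<in> I" "\<And>i. i \<noteq> j \<Longrightarrow> x i = y i"
proof -
  obtain j where j: "{i\<in>I. x i \<noteq> y i} = {j}"
    using assms unfolding differ_one_in_def by (auto simp: card_1_singleton_iff)
  with assms show ?thesis
    by (intro that[of j]) (auto simp: differ_one_in_def)
qed

definition ones_defect :: "nat \<Rightarrow> (nat \<Rightarrow> nat) \<Rightarrow> nat" where
  "ones_defect N x = card {i\<in>{1..N}. x i \<noteq> 1}"

definition has_non_one :: "nat set \<Rightarrow> (nat \<Rightarrow> nat) \<Rightarrow> bool" where
  "has_non_one I x \<longleftrightarrow> (\<exists>i\<in>I. x i \<noteq> 1)"

text \<open>The least number of E0 steps that, starting with last digit \<open>d\<close>, visit last digit 2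
  (if the A block must change), last digit 1 (if the B block must change) and end at 0.\<close>
definition switch_cost :: "nat \<Rightarrow> bool \<Rightarrow> bool \<Rightarrow> nat" where
  "switch_cost d needA needB =
     (if d = 0 then (if needA \<and> needB then 3 else if needA \<or> needB then 2 else 0)
      else if d = 1 then (if needA then 2 else 1)
      else (if needB then 2 else 1))"

definition e3c_potential :: "nat \<Rightarrow> nat \<Rightarrow> nat \<Rightarrow> (nat \<Rightarrow> nat) \<Rightarrow> nat" where
  "e3c_potential r s t x = ones_defect (r+s+t) x +
     switch_cost (x 0) (has_non_one {s+t+1..r+s+t} x) (has_non_one {t+1..s+t} x)"

lemma switch_cost_change_digit: "switch_cost d a b \<le> switch_cost e a b + 1" if "d < 3" "e < 3"
  using that unfolding switch_cost_def by auto

lemma ones_defect_change_one: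
  assumes "\<And>i. i \<noteq> j \<Longrightarrow> x i = y i"
  shows "ones_defect N x \<le> ones_defect N y + 1"
proof -
  have "ones_defect N x \<le> card (insert j {i\<in>{1..N}. y i \<noteq> 1})"
    unfolding ones_defect_def using assms by (intro card_mono) auto
  also have "\<dots> \<le> ones_defect N y + 1"
    unfolding ones_defect_def by (simp add: card_insert_if)
  finally show ?thesis .
qed

lemma has_non_one_cong: "(\<And>i. i \<in> I \<Longrightarrow> x i = y i) \<Longrightarrow> has_non_one I x = has_non_one I y"
  unfolding has_non_one_def by auto

lemma e3c_potential_adj:
  assumes "e3c_adj r s t x y"
  shows "e3c_potential r s t x \<le> e3c_potential r s t y + 1"
proof -
  let ?A = "{s+t+1..r+s+t}" and ?B = "{t+1..s+t}"
  have digits: "x 0 < 3" "y 0 < 3" using assms unfolding e3c_adj_def e3c_vert_def by auto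
  consider (E0) "\<forall>i. 1 \<le> i \<longrightarrow> x i = y i"
    | (E1) "x 0 = 0" "y 0 = 0" "differ_one_in {1..t} x y"
    | (E2) "x 0 = 1" "y 0 = 1" "differ_one_in ?B x y"
    | (E3) "x 0 = 2" "y 0 = 2" "differ_one_in ?A x y"
    using assms unfolding e3c_adj_def by (elim conjE disjE) auto
  then show ?thesis
  proof cases
    case E0
    then have "ones_defect (r+s+t) x = ones_defect (r+s+t) y"
      unfolding ones_defect_def by (intro arg_cong[where f = card]) auto
    moreover have "has_non_one ?A x = has_non_one ?A y" "has_non_one ?B x = has_non_one ?B y"
      using E0 by (auto intro!: has_non_one_cong)
    ultimately show ?thesis
      unfolding e3c_potential_def using switch_cost_change_digit[OF digits] by simp
  next
    case E1
    obtain j where "j \<in> {1..t}" and off_j: "\<And>i. i \<noteq> j \<Longrightarrow> x i = y i"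
      using E1(3) by (rule differ_one_inE) (rule that)
    then have "has_non_one ?A x = has_non_one ?A y" "has_non_one ?B x = has_non_one ?B y"
      by (auto intro!: has_non_one_cong off_j)
    with E1 show ?thesis
      unfolding e3c_potential_def
      using ones_defect_change_one[of j x y "r+s+t", OF off_j] by simp
  next
    case E2
    obtain j where "j \<in> ?B" and off_j: "\<And>i. i \<noteq> j \<Longrightarrow> x i = y i"
      using E2(3) by (rule differ_one_inE) (rule that)
    then have "has_non_one ?A x = has_non_one ?A y"
      by (auto intro!: has_non_one_cong off_j)
    with E2 show ?thesis
      unfolding e3c_potential_def switch_cost_def
      using ones_defect_change_one[of j x y "r+s+t", OF off_j] by simp
  next
    case E3
    obtain j where "j \<in> ?A" and off_j: "\<And>i. i \<noteq> j \<Longrightarrow> x i = y i"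
      using E3(3) by (rule differ_one_inE) (rule that)
    then have "has_non_one ?B x = has_non_one ?B y"
      by (auto intro!: has_non_one_cong off_j)
    with E3 show ?thesis
      unfolding e3c_potential_def switch_cost_def
      using ones_defect_change_one[of j x y "r+s+t", OF off_j] by simp
  qed
qed

definition zero_vertex :: "nat \<Rightarrow> nat \<Rightarrow> nat" where
  "zero_vertex d = (\<lambda>i. if i = 0 then d else 0)"

definition ones_vertex :: "nat \<Rightarrow> nat \<Rightarrow> nat" where
  "ones_vertex N = (\<lambda>i. if 1 \<le> i \<and> i \<le> N then 1 else 0)"

text \<open>All neighbours of \<open>zero_vertex 2\<close> except \<open>zero_vertex 0\<close>.\<close>
definition e3c_fault_set :: "nat \<Rightarrow> nat \<Rightarrow> nat \<Rightarrow> (nat \<Rightarrow> nat) set" where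
  "e3c_fault_set r s t =
     insert (zero_vertex 1) ((\<lambda>(j, c). (zero_vertex 2)(j := c)) ` ({s+t+1..r+s+t} \<times> {1, 2}))"

lemma zero_vertex_in_e3c_vert: "d < 3 \<Longrightarrow> zero_vertex d \<in> e3c_vert r s t"
  unfolding e3c_vert_def zero_vertex_def by auto

lemma ones_vertex_in_e3c_vert: "ones_vertex (r+s+t) \<in> e3c_vert r s t"
  unfolding e3c_vert_def ones_vertex_def by auto

lemma zero_vertex_ne_ones_vertex: "d \<noteq> 0 \<Longrightarrow> zero_vertex d \<noteq> ones_vertex N"
  by (auto simp: zero_vertex_def ones_vertex_def dest: fun_cong[where x = 0])

lemma card_e3c_fault_set: "card (e3c_fault_set r s t) = 2*r + 1"
proof -
  let ?upd = "\<lambda>(j, c). (zero_vertex 2)(j := c)" and ?I = "{s+t+1..r+s+t} \<times> {1::nat, 2}"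
  have "inj_on ?upd ?I"
  proof (rule inj_onI)
    fix p p' assume "p \<in> ?I" "p' \<in> ?I" and eq_upd: "?upd p = ?upd p'"
    then obtain j c j' c' where p: "p = (j, c)" "p' = (j', c')" "j \<ge> 1" "c \<noteq> 0"
      by (cases p, cases p') auto
    with eq_upd have eq: "(zero_vertex 2)(j := c) = (zero_vertex 2)(j' := c')" by simp
    have "c = (if j = j' then c' else 0)"
      using fun_cong[OF eq, of j] \<open>j \<ge> 1\<close> by (simp add: zero_vertex_def)
    with \<open>c \<noteq> 0\<close> have "j = j'" by (simp split: if_splits)
    with p show "p = p'" using fun_cong[OF eq, of j] by simp
  qed
  moreover have "zero_vertex 1 \<notin> ?upd ` ?I"
    by (auto simp: zero_vertex_def dest!: fun_cong[where x = 0])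
  ultimately show ?thesis
    unfolding e3c_fault_set_def by (simp add: card_image card_cartesian_product)
qed

lemma e3c_fault_set_subset:
  "e3c_fault_set r s t \<subseteq> e3c_vert r s t - {zero_vertex 2, ones_vertex (r+s+t)}"
proof -
  have "(zero_vertex 2)(j := c) \<in> e3c_vert r s t - {zero_vertex 2, ones_vertex (r+s+t)}"
    if "j \<in> {s+t+1..r+s+t}" "c \<in> {1, 2}" for j c
    using that by (auto simp: e3c_vert_def zero_vertex_def ones_vertex_def fun_eq_iff)
  moreover have "zero_vertex 1 \<noteq> zero_vertex 2"
    by (auto simp: zero_vertex_def fun_eq_iff)
  then have "zero_vertex 1 \<in> e3c_vert r s t - {zero_vertex 2, ones_vertex (r+s+t)}"
    by (simp add: zero_vertex_in_e3c_vert zero_vertex_ne_ones_vertex)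
  ultimately show ?thesis unfolding e3c_fault_set_def by auto
qed

lemma e3c_adj_zero_vertex_2:
  assumes "e3c_adj r s t (zero_vertex 2) b" and "b \<notin> e3c_fault_set r s t"
  shows "b = zero_vertex 0"
proof -
  have b: "b \<in> e3c_vert r s t" "b \<noteq> zero_vertex 2" using assms(1) unfolding e3c_adj_def by auto
  consider (E0) "\<forall>i. 1 \<le> i \<longrightarrow> b i = 0" "b 0 \<noteq> 2"
    | (E3) "differ_one_in {s+t+1..r+s+t} (zero_vertex 2) b"
    using assms(1) unfolding e3c_adj_def by (auto simp: zero_vertex_def)
  then show ?thesis
  proof cases
    case E0
    from b have "b 0 < 3" by (auto simp: e3c_vert_def)
    with E0 have "b 0 = 0 \<or> b 0 = 1" by auto
    moreover have "zero_vertex (b 0) = b"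
    proof
      fix i show "zero_vertex (b 0) i = b i" using E0 by (cases i) (auto simp: zero_vertex_def)
    qed
    ultimately have "b = zero_vertex 0 \<or> b = zero_vertex 1" by auto
    with assms(2) show ?thesis unfolding e3c_fault_set_def by auto
  next
    case E3
    obtain j where j: "j \<in> {s+t+1..r+s+t}" and off_j: "\<And>i. i \<noteq> j \<Longrightarrow> zero_vertex 2 i = b i"
      using E3 by (rule differ_one_inE) (rule that)
    then have b_upd: "(zero_vertex 2)(j := b j) = b" by auto
    have "b j \<noteq> 0"
    proof
      assume "b j = 0"
      with j have "(zero_vertex 2)(j := b j) = zero_vertex 2" by (auto simp: zero_vertex_def)
      with b_upd b(2) show False by simp
    qed
    moreover have "b j < 3" using b(1) j by (auto simp: e3c_vert_def)
    ultimately have "(j, b j) \<in> {s+t+1..r+s+t} \<times> {1, 2}" using j by auto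
    with b_upd have "b \<in> e3c_fault_set r s t"
      unfolding e3c_fault_set_def by (auto intro!: image_eqI[of _ _ "(j, b j)"])
    with assms(2) show ?thesis by blast
  qed
qed

lemma e3c_potential_zero_vertex_0:
  assumes "1 \<le> r" "1 \<le> s"
  shows "e3c_potential r s t (zero_vertex 0) = r+s+t+3"
proof -
  have "{i\<in>{1..r+s+t}. zero_vertex 0 i \<noteq> 1} = {1..r+s+t}"
    by (auto simp: zero_vertex_def)
  then have "ones_defect (r+s+t) (zero_vertex 0) = r+s+t"
    unfolding ones_defect_def by simp
  moreover have "has_non_one {s+t+1..r+s+t} (zero_vertex 0)" "has_non_one {t+1..s+t} (zero_vertex 0)"
    unfolding has_non_one_def zero_vertex_def using assms by force+
  ultimately show ?thesis unfolding e3c_potential_def switch_cost_def by (simp add: zero_vertex_def)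
qed

lemma e3c_potential_ones_vertex: "e3c_potential r s t (ones_vertex (r+s+t)) = 0"
proof -
  have "ones_defect (r+s+t) (ones_vertex (r+s+t)) = 0"
    unfolding ones_defect_def ones_vertex_def by simp
  then show ?thesis
    unfolding e3c_potential_def switch_cost_def has_non_one_def by (simp add: ones_vertex_def)
qed

theorem theorem1:
  fixes r s t :: nat
  assumes "1 \<le> r" and "r \<le> s" and "s \<le> t"
  shows "fault_diam (e3c_vert r s t) (e3c_adj r s t) (2*r+1) \<ge> enat (r+s+t+4)"
proof -
  let ?V = "e3c_vert r s t" and ?E = "e3c_adj r s t" and ?F = "e3c_fault_set r s t"
    and ?v = "ones_vertex (r+s+t)" and ?\<phi> = "e3c_potential r s t"
  have "enat (r+s+t+4) = eSuc (enat (?\<phi> (zero_vertex 0) - ?\<phi> ?v))"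
    using assms by (simp add: e3c_potential_zero_vertex_0 e3c_potential_ones_vertex eSuc_enat)
  also have "\<dots> \<le> eSuc (gdist (?V - ?F) ?E (zero_vertex 0) ?v)"
    unfolding eSuc_ile_mono by (rule gdist_ge_potential_drop) (rule e3c_potential_adj)
  also have "\<dots> \<le> gdist (?V - ?F) ?E (zero_vertex 2) ?v"
    by (rule gdist_ge_eSuc_unique_neighbour)
      (auto simp: zero_vertex_ne_ones_vertex intro: e3c_adj_zero_vertex_2)
  also have "\<dots> \<le> fault_diam ?V ?E (2*r+1)"
    by (intro gdist_le_fault_diam zero_vertex_in_e3c_vert ones_vertex_in_e3c_vert
        zero_vertex_ne_ones_vertex e3c_fault_set_subset card_e3c_fault_set) simp_all
  finally show ?thesis .
qed

end
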